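(* If $G\neq K_4$ is a connected, claw-free cubic graph, then there exists a vertex cover $P$ of $G$ such that every triangle of $G$ contains exactly two vertices from $P$.
   Context: A graph is claw-free if it has no induced subgraph isomorphic to $K_{1,3}$; it is cubic if every vertex has degree $3$. A vertex cover is a set of vertices meeting every edge. *)

theory Defs
  imports Main
begin

definition simple_graph :: "'a set \<Rightarrow> ('a \<Rightarrow> 'a \<Rightarrow> bool) \<Rightarrow> bool" where
  "simple_graph V E \<longleftrightarrow> finite V \<and> (\<forall>u v. E u v \<longrightarrow> u \<in> V \<and> v \<in> V) \<and>
     (\<forall>u v. E u v \<longrightarrow> E v u) \<and> (\<forall>v. \<not> E v v)"

definition neighbours :: "'a set \<Rightarrow> ('a \<Rightarrow> 'a \<Rightarrow> bool) \<Rightarrow> 'a \<Rightarrow> 'a set" where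
  "neighbours V E v = {u \<in> V. E v u}"

definition cubic :: "'a set \<Rightarrow> ('a \<Rightarrow> 'a \<Rightarrow> bool) \<Rightarrow> bool" where
  "cubic V E \<longleftrightarrow> (\<forall>v\<in>V. card (neighbours V E v) = 3)"

definition connected_graph :: "'a set \<Rightarrow> ('a \<Rightarrow> 'a \<Rightarrow> bool) \<Rightarrow> bool" where
  "connected_graph V E \<longleftrightarrow> V \<noteq> {} \<and> (\<forall>u\<in>V. \<forall>v\<in>V. E\<^sup>*\<^sup>* u v)"

definition claw_free :: "'a set \<Rightarrow> ('a \<Rightarrow> 'a \<Rightarrow> bool) \<Rightarrow> bool" where
  "claw_free V E \<longleftrightarrow> \<not> (\<exists>v\<in>V. \<exists>a b c. E v a \<and> E v b \<and> E v c \<and>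
      a \<noteq> b \<and> a \<noteq> c \<and> b \<noteq> c \<and> \<not> E a b \<and> \<not> E a c \<and> \<not> E b c)"

definition is_K4 :: "'a set \<Rightarrow> ('a \<Rightarrow> 'a \<Rightarrow> bool) \<Rightarrow> bool" where
  "is_K4 V E \<longleftrightarrow> card V = 4 \<and> (\<forall>u\<in>V. \<forall>v\<in>V. u \<noteq> v \<longrightarrow> E u v)"

definition vertex_cover :: "'a set \<Rightarrow> ('a \<Rightarrow> 'a \<Rightarrow> bool) \<Rightarrow> 'a set \<Rightarrow> bool" where
  "vertex_cover V E P \<longleftrightarrow> P \<subseteq> V \<and> (\<forall>u v. E u v \<longrightarrow> u \<in> P \<or> v \<in> P)"

definition triangles :: "'a set \<Rightarrow> ('a \<Rightarrow> 'a \<Rightarrow> bool) \<Rightarrow> 'a set set" where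
  "triangles V E = {{a, b, c} | a b c. a \<in> V \<and> b \<in> V \<and> c \<in> V \<and>
      a \<noteq> b \<and> a \<noteq> c \<and> b \<noteq> c \<and> E a b \<and> E a c \<and> E b c}"

end

theory Submission
  imports Defs
begin

text \<open>
  In a cubic graph, two triangles sharing a vertex \<open>v\<close> must share an edge (otherwise \<open>v\<close>
  has four neighbours), so they form a diamond, i.e. \<open>K\<^sub>4\<close> minus an edge, unless they span a
  \<open>K\<^sub>4\<close>, which by connectedness would be the whole graph. The two central vertices of a
  diamond lie on no other triangle and have all their neighbours inside it; every other triangle
  is plain: none of its vertices is central, so it meets no other triangle.

  It suffices to find an independent set \<open>I\<close> meeting every triangle in exactly one vertex and
  to take \<open>P = V - I\<close>. From every diamond, \<open>I\<close> takes one of the two central vertices. A plain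
  triangle has at least two edges leaving it and an edge leaves at most two plain triangles, so
  by Hall's theorem every plain triangle can choose a leaving edge, injectively; \<open>I\<close> takes the
  end of that edge in the triangle. Two such vertices are adjacent only if the edge between them
  was chosen by both of their triangles.
\<close>

section \<open>Hall's theorem\<close>

lemma hall_condition_sets_finite_nonempty:
  assumes "\<forall>S\<subseteq>N. card S \<le> card (\<Union>(A ` S))" "i \<in> N"
  shows "finite (A i)" "A i \<noteq> {}"
proof -
  have "0 < card (A i)" using assms(1)[rule_format, of "{i}"] assms(2) by simp
  then show "finite (A i)" "A i \<noteq> {}" by (simp_all add: card_gt_0_iff)
qed

lemma hall_condition_finite_Union:
  assumes "\<forall>S\<subseteq>N. card S \<le> card (\<Union>(A ` S))" "S \<subseteq> N" "finite S"
  shows "finite (\<Union>(A ` S))"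
  using assms hall_condition_sets_finite_nonempty(1)[OF assms(1)] by blast

lemma hall_condition_remove_tight_subfamily:
  assumes "finite N" and hall: "\<forall>S\<subseteq>N. card S \<le> card (\<Union>(A ` S))"
    and S: "S \<subseteq> N" "card (\<Union>(A ` S)) = card S"
  shows "\<forall>T\<subseteq>N - S. card T \<le> card (\<Union>i\<in>T. A i - \<Union>(A ` S))"
proof (intro allI impI)
  fix T assume T: "T \<subseteq> N - S"
  have fin: "finite T" "finite S"
    using T S \<open>finite N\<close> by (meson Diff_subset finite_subset subset_trans)+
  have "card T + card S = card (T \<union> S)"
    using T fin by (subst card_Un_disjoint) auto
  also have "\<dots> \<le> card (\<Union>(A ` (T \<union> S)))"
    using T S by (intro hall[rule_format]) blast
  also have "\<dots> = card (\<Union>(A ` S)) + card (\<Union>(A ` (T \<union> S)) - \<Union>(A ` S))"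
  proof -
    have "finite (\<Union>(A ` (T \<union> S)))"
      using T S fin by (intro hall_condition_finite_Union[OF hall]) auto
    moreover have "\<Union>(A ` (T \<union> S)) \<inter> \<Union>(A ` S) = \<Union>(A ` S)" by auto
    ultimately show ?thesis by (metis card_Int_Diff)
  qed
  also have "\<Union>(A ` (T \<union> S)) - \<Union>(A ` S) = (\<Union>i\<in>T. A i - \<Union>(A ` S))"
    by blast
  finally show "card T \<le> card (\<Union>i\<in>T. A i - \<Union>(A ` S))"
    using S(2) by linarith
qed

lemma hall_condition_remove_representative:
  assumes "finite N" and hall: "\<forall>S\<subseteq>N. card S \<le> card (\<Union>(A ` S))"
    and surplus: "\<forall>S. S \<noteq> {} \<longrightarrow> S \<subset> N \<longrightarrow> card S < card (\<Union>(A ` S))"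
    and "i \<in> N"
  shows "\<forall>T\<subseteq>N - {i}. card T \<le> card (\<Union>j\<in>T. A j - {e})"
proof (intro allI impI)
  fix T assume T: "T \<subseteq> N - {i}"
  show "card T \<le> card (\<Union>j\<in>T. A j - {e})"
  proof (cases "T = {}")
    case False
    have "finite T" using T \<open>finite N\<close> finite_subset by blast
    then have "finite (\<Union>(A ` T))" using hall_condition_finite_Union[OF hall] T by blast
    moreover have "card T < card (\<Union>(A ` T))" using surplus False T \<open>i \<in> N\<close> by blast
    moreover have "(\<Union>j\<in>T. A j - {e}) = \<Union>(A ` T) - {e}" by blast
    ultimately show ?thesis by (auto simp: card_Diff_singleton_if)
  qed simp
qed

lemma distinct_representatives_Un:
  assumes "S \<subseteq> N"
    and f1: "\<forall>i\<in>S. f1 i \<in> A i" "inj_on f1 S"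
    and f2: "\<forall>i\<in>N - S. f2 i \<in> A i - \<Union>(A ` S)" "inj_on f2 (N - S)"
  shows "\<exists>f. (\<forall>i\<in>N. f i \<in> A i) \<and> inj_on f N"
proof -
  have "f1 i \<noteq> f2 j" if "i \<in> S" "j \<in> N - S" for i j
    using f1(1) f2(1) that by auto
  then have "f1 ` S \<inter> f2 ` (N - S) = {}" by blast
  define g where "g = (\<lambda>i. if i \<in> S then f1 i else f2 i)"
  have "inj_on g (S \<union> (N - S))"
    unfolding g_def using f1(2) f2(2) \<open>f1 ` S \<inter> f2 ` (N - S) = {}\<close> by (intro inj_on_disjoint_Un)
  moreover have N: "S \<union> (N - S) = N" using \<open>S \<subseteq> N\<close> by blast
  ultimately have "inj_on g N" by (simp only: N)
  moreover have "\<forall>i\<in>N. g i \<in> A i" using f1(1) f2(1) by (simp add: g_def)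
  ultimately show ?thesis by blast
qed

lemma distinct_representatives_insert:
  assumes "i \<in> N" "e \<in> A i"
    and f: "\<forall>j\<in>N - {i}. f j \<in> A j - {e}" "inj_on f (N - {i})"
  shows "\<exists>f. (\<forall>j\<in>N. f j \<in> A j) \<and> inj_on f N"
proof -
  define g where "g = f(i := e)"
  have "inj_on g (N - {i})" using f(2) by (simp add: g_def inj_on_def)
  moreover have "g i \<notin> g ` (N - {i})" using f(1) by (auto simp: g_def)
  ultimately have "inj_on g N"
    using inj_on_insert[of g i "N - {i}"] by (simp add: insert_absorb \<open>i \<in> N\<close>)
  moreover have "\<forall>j\<in>N. g j \<in> A j" using f(1) \<open>e \<in> A i\<close> by (simp add: g_def)
  ultimately show ?thesis by blast
qed

theorem hall_marriage:
  assumes "finite N" "\<forall>S\<subseteq>N. card S \<le> card (\<Union>(A ` S))"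
  shows "\<exists>f. (\<forall>i\<in>N. f i \<in> A i) \<and> inj_on f N"
  using assms
proof (induction N arbitrary: A rule: finite_psubset_induct)
  case (psubset N)
  note hall = psubset.prems
  consider (tight) S where "S \<noteq> {}" "S \<subset> N" "card (\<Union>(A ` S)) = card S"
    | (surplus) "\<forall>S. S \<noteq> {} \<longrightarrow> S \<subset> N \<longrightarrow> card S < card (\<Union>(A ` S))"
    using hall by (metis le_neq_implies_less psubset_imp_subset)
  then show ?case
  proof cases
    case tight
    obtain f1 where "\<forall>i\<in>S. f1 i \<in> A i" "inj_on f1 S"
      using psubset.IH[OF \<open>S \<subset> N\<close>, of A] hall tight by auto
    moreover obtain f2 where "\<forall>i\<in>N - S. f2 i \<in> A i - \<Union>(A ` S)" "inj_on f2 (N - S)"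
      using psubset.IH[of "N - S" "\<lambda>i. A i - \<Union>(A ` S)"] tight psubset.hyps
        hall_condition_remove_tight_subfamily[OF psubset.hyps hall] by blast
    ultimately show ?thesis
      using tight by (intro distinct_representatives_Un[of S]) auto
  next
    case surplus
    show ?thesis
    proof (cases "N = {}")
      case False
      then obtain i where "i \<in> N" by blast
      then obtain e where "e \<in> A i" using hall_condition_sets_finite_nonempty(2)[OF hall] by blast
      have "\<exists>f. (\<forall>j\<in>N - {i}. f j \<in> A j - {e}) \<and> inj_on f (N - {i})"
        using \<open>i \<in> N\<close> psubset.hyps
          hall_condition_remove_representative[OF psubset.hyps hall surplus \<open>i \<in> N\<close>]
        by (intro psubset.IH) auto
      then show ?thesis
        using distinct_representatives_insert[of i N e A] \<open>i \<in> N\<close> \<open>e \<in> A i\<close> by blast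
    qed simp
  qed
qed

section \<open>Cubic graphs\<close>

locale cubic_graph =
  fixes V :: "'a set" and E :: "'a \<Rightarrow> 'a \<Rightarrow> bool"
  assumes simple: "simple_graph V E" and cubic: "cubic V E"
begin

lemma finite_vertices: "finite V"
  using simple by (simp add: simple_graph_def)

lemma edge_vertices: "E u v \<Longrightarrow> u \<in> V" "E u v \<Longrightarrow> v \<in> V"
  using simple by (simp_all add: simple_graph_def)

lemma edge_sym: "E u v \<Longrightarrow> E v u"
  using simple by (simp add: simple_graph_def)

lemma edge_distinct: "E u v \<Longrightarrow> u \<noteq> v"
  using simple by (auto simp: simple_graph_def)

lemma mem_neighbours_iff: "u \<in> neighbours V E v \<longleftrightarrow> E v u"
  by (auto simp: neighbours_def intro: edge_vertices)

lemma neighbours_eq: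
  assumes "E v a" "E v b" "E v c" "a \<noteq> b" "a \<noteq> c" "b \<noteq> c"
  shows "neighbours V E v = {a, b, c}"
proof (rule card_subset_eq[symmetric])
  show "finite (neighbours V E v)" using finite_vertices by (simp add: neighbours_def)
  show "{a, b, c} \<subseteq> neighbours V E v" using assms by (simp add: mem_neighbours_iff)
  show "card {a, b, c} = card (neighbours V E v)"
    using assms cubic edge_vertices(1) by (simp add: cubic_def)
qed

lemma no_four_neighbours:
  assumes "E v a" "E v b" "E v c" "E v d" "a \<noteq> b" "a \<noteq> c" "b \<noteq> c"
  shows "d \<in> {a, b, c}"
  using neighbours_eq[OF assms(1-3,5-7)] assms(4) mem_neighbours_iff by blast

lemma obtain_third_neighbour:
  assumes "E v a" "E v b" "a \<noteq> b"
  obtains c where "E v c" "c \<noteq> a" "c \<noteq> b"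
proof -
  have "card (neighbours V E v) = 3" using assms(1) cubic edge_vertices(1) by (simp add: cubic_def)
  then obtain x y z where "neighbours V E v = {x, y, z}" "x \<noteq> y" "y \<noteq> z" "x \<noteq> z"
    by (auto simp: card_3_iff)
  then show ?thesis using that assms by (metis insert_iff mem_neighbours_iff)
qed

lemma K4_subgraph_is_K4:
  assumes "connected_graph V E"
    and K4: "E v a" "E v b" "E v c" "E a b" "E a c" "E b c"
  shows "is_K4 V E"
proof -
  define W where "W = {v, a, b, c}"
  have distinct: "v \<noteq> a" "v \<noteq> b" "v \<noteq> c" "a \<noteq> b" "a \<noteq> c" "b \<noteq> c"
    using K4 edge_distinct by auto
  have closed: "u \<in> W" if "w \<in> W" "E w u" for w u
  proof -
    have sym: "E a v" "E b v" "E c v" "E b a" "E c a" "E c b" using K4 edge_sym by auto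
    from \<open>w \<in> W\<close> consider "w = v" | "w = a" | "w = b" | "w = c" by (auto simp: W_def)
    then show ?thesis
    proof cases
      case 1 then show ?thesis using no_four_neighbours[of v a b c u] K4 sym distinct that(2)
          by (auto simp: W_def)
    next
      case 2 then show ?thesis using no_four_neighbours[of a v b c u] K4 sym distinct that(2)
          by (auto simp: W_def)
    next
      case 3 then show ?thesis using no_four_neighbours[of b v a c u] K4 sym distinct that(2)
          by (auto simp: W_def)
    next
      case 4 then show ?thesis using no_four_neighbours[of c v a b u] K4 sym distinct that(2)
          by (auto simp: W_def)
    qed
  qed
  have "u \<in> W" if "E\<^sup>*\<^sup>* v u" for u
    using that by (induction rule: rtranclp_induct) (simp add: W_def, blast intro: closed)
  moreover have "v \<in> V" using K4 edge_vertices by blast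
  ultimately have "V \<subseteq> W" using assms(1) by (auto simp: connected_graph_def)
  moreover have "W \<subseteq> V" using K4 edge_vertices by (auto simp: W_def)
  ultimately have "V = W" by blast
  then show ?thesis
    using distinct K4 edge_sym by (auto simp: is_K4_def W_def)
qed

lemma triangleI:
  assumes "E v p" "E v q" "E p q"
  shows "{v, p, q} \<in> triangles V E"
proof -
  have "v \<in> V" "p \<in> V" "q \<in> V" "v \<noteq> p" "v \<noteq> q" "p \<noteq> q"
    using assms by (simp_all add: edge_vertices edge_distinct)
  then show ?thesis unfolding triangles_def using assms by blast
qed

lemma triangle_at:
  assumes "T \<in> triangles V E" "v \<in> T"
  obtains p q where "T = {v, p, q}" "E v p" "E v q" "E p q"
proof -
  obtain a b c where T: "T = {a, b, c}" "E a b" "E a c" "E b c"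
    using assms(1) by (auto simp: triangles_def)
  from \<open>v \<in> T\<close> consider "v = a" | "v = b" | "v = c" using T(1) by blast
  then show ?thesis
  proof cases
    case 1 then show ?thesis using that T by blast
  next
    case 2 then show ?thesis using that[of a c] T edge_sym by (simp add: insert_commute)
  next
    case 3 then show ?thesis using that[of a b] T edge_sym by (simp add: insert_commute)
  qed
qed

lemma triangle_subset_vertices: "T \<in> triangles V E \<Longrightarrow> T \<subseteq> V"
  unfolding triangles_def by blast

lemma card_triangle: "T \<in> triangles V E \<Longrightarrow> card T = 3"
  unfolding triangles_def by auto

lemma finite_triangle: "T \<in> triangles V E \<Longrightarrow> finite T"
  unfolding triangles_def by auto

lemma neighbour_outside_triangle_unique:
  assumes "T \<in> triangles V E" "v \<in> T" "E v y" "E v z" "y \<notin> T" "z \<notin> T"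
  shows "y = z"
proof -
  obtain p q where "T = {v, p, q}" "E v p" "E v q" "E p q"
    using triangle_at assms(1,2) by blast
  then show ?thesis using no_four_neighbours[of v p q y] no_four_neighbours[of v p q z]
    assms(3-6) edge_distinct by auto
qed

end

section \<open>Diamonds in \<open>K\<^sub>4\<close>-free cubic graphs\<close>

locale K4_free_cubic_graph = cubic_graph +
  assumes K4_free: "E v a \<Longrightarrow> E v b \<Longrightarrow> E v c \<Longrightarrow> E a b \<Longrightarrow> E a c \<Longrightarrow> \<not> E b c"
begin

text \<open>The central edge of \<open>diamond v a b c\<close> is \<open>v b\<close>; its tips are \<open>a\<close> and \<open>c\<close>.\<close>

definition diamond :: "'a \<Rightarrow> 'a \<Rightarrow> 'a \<Rightarrow> 'a \<Rightarrow> bool" where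
  "diamond v a b c \<longleftrightarrow> E v a \<and> E v b \<and> E v c \<and> E a b \<and> E b c \<and> a \<noteq> c"

definition central :: "'a \<Rightarrow> bool" where
  "central v \<longleftrightarrow> (\<exists>a b c. diamond v a b c)"

lemma diamondD:
  assumes "diamond v a b c"
  shows "\<not> E a c" "neighbours V E v = {a, b, c}"
    "a \<noteq> b" "b \<noteq> c" "a \<noteq> c" "v \<noteq> a" "v \<noteq> b" "v \<noteq> c"
  using assms K4_free[of v a b c] neighbours_eq[of v a b c] edge_distinct edge_sym
  unfolding diamond_def by blast+

lemma diamond_mirror: "diamond v a b c \<Longrightarrow> diamond v c b a"
  unfolding diamond_def using edge_sym by blast

lemma diamond_swap_centres: "diamond v a b c \<Longrightarrow> diamond b a v c"
  unfolding diamond_def using edge_sym by blast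

lemma diamond_tip_not_central:
  assumes "diamond v a b c"
  shows "\<not> central a"
proof
  assume "central a"
  then obtain p q r where pqr: "diamond a p q r" by (auto simp: central_def)
  have av: "E a v" "E a b" "v \<noteq> b"
    using assms edge_sym diamondD(7)[OF assms] unfolding diamond_def by blast+
  obtain w where w: "E a w" "w \<noteq> v" "w \<noteq> b" using obtain_third_neighbour[OF av] .
  have "{p, q, r} = {v, b, w}"
    using neighbours_eq[OF av(1,2) w(1)] w av(3) diamondD(2)[OF pqr] by simp
  moreover have "E p q" "E q r" "p \<noteq> r" "q \<noteq> p" "q \<noteq> r"
    using pqr diamondD(3-5)[OF pqr] unfolding diamond_def by blast+
  ultimately have "E w v \<or> E w b"
    \<comment> \<open>\<open>w\<close> is one of \<open>p, q, r\<close>, and \<open>q\<close> is adjacent to the other two\<close>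
    using edge_sym by (metis insertCI insertE singletonD)
  moreover have "w \<in> {a, b, c}" if "E w v"
    using that diamondD(2)[OF assms] edge_sym mem_neighbours_iff by blast
  moreover have "w \<in> {a, v, c}" if "E w b"
    using that diamondD(2)[OF diamond_swap_centres[OF assms]] edge_sym mem_neighbours_iff
    by blast
  ultimately have "w = c" using w edge_distinct by blast
  then show False using w(1) diamondD(1)[OF assms] by simp
qed

lemma noncentral_in_one_triangle:
  assumes "\<not> central v" "T1 \<in> triangles V E" "T2 \<in> triangles V E" "v \<in> T1" "v \<in> T2"
  shows "T1 = T2"
proof -
  obtain a b where T1: "T1 = {v, a, b}" "E v a" "E v b" "E a b"
    using triangle_at assms(2,4) by blast
  obtain c d where T2: "T2 = {v, c, d}" "E v c" "E v d" "E c d"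
    using triangle_at assms(3,5) by blast
  have no_diamond: "\<not> diamond v x y z" for x y z using assms(1) by (auto simp: central_def)
  have "{a, b} = {c, d}"
  proof (rule ccontr)
    assume ne: "{a, b} \<noteq> {c, d}"
    have "a \<noteq> b" "c \<noteq> d" using T1 T2 edge_distinct by auto
    consider "a = c" | "a = d" | "b = c" | "b = d" | "a \<notin> {c, d}" "b \<notin> {c, d}" by blast
    then show False
    proof cases
      case 1 then show False using no_diamond[of b a d] ne T1 T2 edge_sym by (auto simp: diamond_def)
    next
      case 2 then show False using no_diamond[of b a c] ne T1 T2 edge_sym by (auto simp: diamond_def)
    next
      case 3 then show False using no_diamond[of a b d] ne T1 T2 edge_sym by (auto simp: diamond_def)
    next
      case 4 then show False using no_diamond[of a b c] ne T1 T2 edge_sym by (auto simp: diamond_def)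
    next
      case 5 then show False using no_four_neighbours[of v a b c d] T1 T2 \<open>a \<noteq> b\<close> \<open>c \<noteq> d\<close>
          by auto
    qed
  qed
  then show ?thesis using T1(1) T2(1) by auto
qed

lemma triangles_at_centre:
  assumes "diamond m a b c" "T \<in> triangles V E" "m \<in> T"
  shows "T = {m, a, b} \<or> T = {m, b, c}"
proof -
  obtain p q where T: "T = {m, p, q}" "E m p" "E m q" "E p q"
    using triangle_at assms(2,3) by blast
  have "p \<in> {a, b, c}" "q \<in> {a, b, c}"
    using T diamondD(2)[OF assms(1)] mem_neighbours_iff by blast+
  moreover have "p \<noteq> q" using T edge_distinct by blast
  moreover have "\<not> E a c" "\<not> E c a" using diamondD(1)[OF assms(1)] edge_sym by blast+
  ultimately have "{p, q} = {a, b} \<or> {p, q} = {b, c}" using T(4) by auto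
  then show ?thesis using T(1) by auto
qed

lemma central_neighbour_of_centre:
  assumes "diamond m a b c" "E m x" "central x"
  shows "x = b"
proof -
  have "x \<in> {a, b, c}" using diamondD(2)[OF assms(1)] assms(2) mem_neighbours_iff by blast
  then show ?thesis
    using diamond_tip_not_central[OF assms(1)] diamond_tip_not_central[OF diamond_mirror[OF assms(1)]]
      assms(3) by auto
qed

section \<open>An independent set meeting every triangle once\<close>

definition plain_triangles :: "'a set set" where
  "plain_triangles = {T \<in> triangles V E. \<forall>v\<in>T. \<not> central v}"

definition out_edges :: "'a set \<Rightarrow> 'a set set" where
  "out_edges T = {{x, u} | x u. x \<in> T \<and> u \<notin> T \<and> E x u}"

lemma finite_plain_triangles: "finite plain_triangles"
proof (rule finite_subset)
  show "plain_triangles \<subseteq> Pow V"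
    using triangle_subset_vertices by (auto simp: plain_triangles_def)
qed (use finite_vertices in simp)

lemma finite_out_edges: "finite (out_edges T)"
proof (rule finite_subset)
  show "out_edges T \<subseteq> Pow V" using edge_vertices by (auto simp: out_edges_def)
qed (use finite_vertices in simp)

lemma two_le_card_out_edges:
  assumes "T \<in> triangles V E"
  shows "2 \<le> card (out_edges T)"
proof -
  obtain p q r where T: "T = {p, q, r}" "E p q" "E p r" "E q r"
    using assms by (auto simp: triangles_def)
  have "p \<noteq> q" "q \<noteq> r" "p \<noteq> r" using T edge_distinct by blast+
  obtain p' where p': "E p p'" "p' \<noteq> q" "p' \<noteq> r"
    using obtain_third_neighbour[OF T(2,3) \<open>q \<noteq> r\<close>] .
  obtain q' where q': "E q q'" "q' \<noteq> p" "q' \<noteq> r"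
    using obtain_third_neighbour[OF edge_sym[OF T(2)] T(4) \<open>p \<noteq> r\<close>] .
  have "p' \<notin> T" "q' \<notin> T" using T(1) p' q' edge_distinct by auto
  then have "{{p, p'}, {q, q'}} \<subseteq> out_edges T"
    unfolding out_edges_def using T(1) p'(1) q'(1) by blast
  moreover have "card {{p, p'}, {q, q'}} = 2"
    using \<open>p \<noteq> q\<close> \<open>q' \<notin> T\<close> T(1) by (auto simp: doubleton_eq_iff)
  ultimately show ?thesis using card_mono[OF finite_out_edges] by metis
qed

lemma card_plain_triangles_containing: "card {T \<in> plain_triangles. x \<in> T} \<le> 1"
proof -
  have "T1 = T2" if "T1 \<in> {T \<in> plain_triangles. x \<in> T}" "T2 \<in> {T \<in> plain_triangles. x \<in> T}"
    for T1 T2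
    using that noncentral_in_one_triangle[of x T1 T2] by (auto simp: plain_triangles_def)
  then show ?thesis
    using finite_plain_triangles by (auto simp: card_le_Suc0_iff_eq)
qed

lemma card_plain_triangles_sharing_out_edge:
  assumes "S \<subseteq> plain_triangles"
  shows "card {T \<in> S. {x, u} \<in> out_edges T} \<le> 2"
proof -
  have "{T \<in> S. {x, u} \<in> out_edges T}
      \<subseteq> {T \<in> plain_triangles. x \<in> T} \<union> {T \<in> plain_triangles. u \<in> T}"
    using assms by (auto simp: out_edges_def doubleton_eq_iff)
  then have "card {T \<in> S. {x, u} \<in> out_edges T}
      \<le> card ({T \<in> plain_triangles. x \<in> T} \<union> {T \<in> plain_triangles. u \<in> T})"
    by (rule card_mono[rotated]) (use finite_plain_triangles in auto)
  also have "\<dots> \<le> card {T \<in> plain_triangles. x \<in> T} + card {T \<in> plain_triangles. u \<in> T}"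
    by (rule card_Un_le)
  also have "\<dots> \<le> 2"
    using card_plain_triangles_containing[of x] card_plain_triangles_containing[of u] by simp
  finally show ?thesis .
qed

lemma plain_triangles_hall_condition:
  assumes S: "S \<subseteq> plain_triangles"
  shows "card S \<le> card (\<Union>(out_edges ` S))"
proof -
  define U where "U = \<Union>(out_edges ` S)"
  have "finite S" using S finite_plain_triangles finite_subset by blast
  moreover have "finite U" using \<open>finite S\<close> finite_out_edges by (simp add: U_def)
  ultimately have double_count:
    "(\<Sum>T\<in>S. card {e \<in> U. e \<in> out_edges T}) = (\<Sum>e\<in>U. card {T \<in> S. e \<in> out_edges T})"
    by (rule sum_multicount_gen) simp
  have "2 * card S = (\<Sum>T\<in>S. 2)" by simp
  also have "\<dots> \<le> (\<Sum>T\<in>S. card (out_edges T))"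
    using S two_le_card_out_edges by (intro sum_mono) (auto simp: plain_triangles_def)
  also have "\<dots> = (\<Sum>T\<in>S. card {e \<in> U. e \<in> out_edges T})"
    by (intro sum.cong arg_cong[where f = card]) (auto simp: U_def)
  also have "\<dots> = (\<Sum>e\<in>U. card {T \<in> S. e \<in> out_edges T})"
    by (rule double_count)
  also have "\<dots> \<le> (\<Sum>e\<in>U. 2)"
    using card_plain_triangles_sharing_out_edge[OF S]
    by (intro sum_mono) (auto simp: U_def out_edges_def)
  finally show ?thesis by (simp add: U_def)
qed

lemma obtain_out_edge_choice:
  obtains f where "\<forall>T\<in>plain_triangles. f T \<in> out_edges T" "inj_on f plain_triangles"
  using hall_marriage[OF finite_plain_triangles] plain_triangles_hall_condition by blast

lemma central_not_adjacent_plain: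
  assumes "T \<in> plain_triangles" "x \<in> T" "central y"
  shows "\<not> E y x"
proof
  assume "E y x"
  have "\<not> central x" and T: "T \<in> triangles V E" using assms(1,2) by (auto simp: plain_triangles_def)
  obtain a b c where d: "diamond y a b c" using assms(3) by (auto simp: central_def)
  have "x \<in> {a, b, c}" using diamondD(2)[OF d] \<open>E y x\<close> mem_neighbours_iff by blast
  moreover have "x \<noteq> b" using \<open>\<not> central x\<close> diamond_swap_centres[OF d] by (auto simp: central_def)
  ultimately have "x \<in> {y, a, b} \<and> {y, a, b} \<in> triangles V E
    \<or> x \<in> {y, b, c} \<and> {y, b, c} \<in> triangles V E"
    using d triangleI unfolding diamond_def by auto
  then have "T = {y, a, b} \<or> T = {y, b, c}"
    using noncentral_in_one_triangle[OF \<open>\<not> central x\<close> T] assms(2) by blast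
  then show False using assms(1,3) by (auto simp: plain_triangles_def)
qed

end

locale transversal_choice = K4_free_cubic_graph +
  fixes f :: "'a set \<Rightarrow> 'a set" and ord :: "'a \<Rightarrow> nat"
  assumes out_edge_choice: "T \<in> plain_triangles \<Longrightarrow> f T \<in> out_edges T"
    and inj_on_choice: "inj_on f plain_triangles"
    and inj_on_ord: "inj_on ord V"
begin

definition chosen_centres :: "'a set" where
  "chosen_centres = {m \<in> V. central m \<and> (\<forall>m'. E m m' \<and> central m' \<longrightarrow> ord m < ord m')}"

definition transversal :: "'a set" where
  "transversal = (\<Union>T\<in>plain_triangles. T \<inter> f T) \<union> chosen_centres"

lemma chosen_out_edge:
  assumes "T \<in> plain_triangles"
  obtains x u where "f T = {x, u}" "T \<inter> f T = {x}" "x \<in> T" "u \<notin> T" "E x u"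
proof -
  obtain x u where "f T = {x, u}" "x \<in> T" "u \<notin> T" "E x u"
    using out_edge_choice[OF assms] by (auto simp: out_edges_def)
  moreover from this have "T \<inter> f T = {x}" by auto
  ultimately show ?thesis using that by blast
qed

lemma chosen_plain_vertices_not_adjacent:
  assumes T: "T \<in> plain_triangles" "x \<in> T \<inter> f T"
    and T': "T' \<in> plain_triangles" "y \<in> T' \<inter> f T'"
  shows "\<not> E x y"
proof
  assume "E x y"
  obtain x0 u where x: "f T = {x0, u}" "T \<inter> f T = {x0}" "x0 \<in> T" "u \<notin> T" "E x0 u"
    using chosen_out_edge[OF T(1)] .
  obtain y0 w where y: "f T' = {y0, w}" "T' \<inter> f T' = {y0}" "y0 \<in> T'" "w \<notin> T'" "E y0 w"
    using chosen_out_edge[OF T'(1)] .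
  have "x = x0" "y = y0" using x(2) y(2) T(2) T'(2) by auto
  have tri: "T \<in> triangles V E" "T' \<in> triangles V E" and "\<not> central x" "\<not> central y"
    using T T' by (auto simp: plain_triangles_def)
  show False
  proof (cases "T = T'")
    case True
    then show False using \<open>x = x0\<close> \<open>y = y0\<close> x(2) y(2) \<open>E x y\<close> edge_distinct by auto
  next
    case False
    have "y \<notin> T" "x \<notin> T'"
      using noncentral_in_one_triangle[OF \<open>\<not> central y\<close> tri]
        noncentral_in_one_triangle[OF \<open>\<not> central x\<close> tri] T(2) T'(2) False by blast+
    have "u = y"
      using neighbour_outside_triangle_unique[OF tri(1) x(3) x(5)] \<open>x = x0\<close> \<open>E x y\<close> x(4)
        \<open>y \<notin> T\<close> by simp
    moreover have "w = x"
      using neighbour_outside_triangle_unique[OF tri(2) y(3) y(5)] \<open>y = y0\<close>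
        edge_sym[OF \<open>E x y\<close>] y(4) \<open>x \<notin> T'\<close> by simp
    ultimately have "f T = f T'" using x(1) y(1) \<open>x = x0\<close> \<open>y = y0\<close> by auto
    then show False using inj_on_choice T(1) T'(1) False by (auto simp: inj_on_def)
  qed
qed

lemma transversal_independent:
  assumes "x \<in> transversal" "y \<in> transversal"
  shows "\<not> E x y"
proof
  assume "E x y"
  then have "E y x" by (rule edge_sym)
  consider "x \<in> (\<Union>T\<in>plain_triangles. T \<inter> f T)" "y \<in> (\<Union>T\<in>plain_triangles. T \<inter> f T)"
    | "x \<in> (\<Union>T\<in>plain_triangles. T \<inter> f T)" "y \<in> chosen_centres"
    | "x \<in> chosen_centres" "y \<in> (\<Union>T\<in>plain_triangles. T \<inter> f T)"
    | "x \<in> chosen_centres" "y \<in> chosen_centres"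
    using assms by (auto simp: transversal_def)
  then show False
  proof cases
    case 1 then show False using chosen_plain_vertices_not_adjacent \<open>E x y\<close> by blast
  next
    case 2 then show False using central_not_adjacent_plain \<open>E y x\<close> by (auto simp: chosen_centres_def)
  next
    case 3 then show False using central_not_adjacent_plain \<open>E x y\<close> by (auto simp: chosen_centres_def)
  next
    case 4
    then have "ord x < ord y" "ord y < ord x"
      using \<open>E x y\<close> \<open>E y x\<close> unfolding chosen_centres_def by blast+
    then show False by simp
  qed
qed

lemma diamond_triangle_meets_transversal_once:
  assumes d: "diamond m a b c"
  shows "\<exists>z. {m, a, b} \<inter> transversal = {z}"
proof -
  have E: "E m a" "E m b" "E a b" using d by (auto simp: diamond_def)
  have "central m" "central b" using d diamond_swap_centres[OF d] by (auto simp: central_def)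
  have "\<not> central a" using diamond_tip_not_central[OF d] .
  have not_plain: "v \<notin> T" if "T \<in> plain_triangles" "v \<in> {m, a, b}" for v T
  proof
    assume "v \<in> T"
    have "\<not> central v" "T \<in> triangles V E" using that(1) \<open>v \<in> T\<close> by (auto simp: plain_triangles_def)
    then have "v = a" using that(2) \<open>central m\<close> \<open>central b\<close> by auto
    then have "T = {m, a, b}"
      using noncentral_in_one_triangle[OF \<open>\<not> central v\<close> \<open>T \<in> triangles V E\<close> triangleI[OF E]]
        \<open>v \<in> T\<close> by simp
    then show False using that(1) \<open>central m\<close> by (auto simp: plain_triangles_def)
  qed
  have "m \<in> V" "b \<in> V" using edge_vertices(1)[OF E(1)] edge_vertices(2)[OF E(2)] .
  have in_transversal_iff: "v \<in> transversal \<longleftrightarrow> v \<in> chosen_centres" if "v \<in> {m, a, b}" for v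
    using not_plain[OF _ that] by (auto simp: transversal_def)
  have "m \<in> chosen_centres \<longleftrightarrow> ord m < ord b"
    unfolding chosen_centres_def
    using \<open>m \<in> V\<close> \<open>central m\<close> \<open>central b\<close> E(2) central_neighbour_of_centre[OF d] by blast
  moreover have "b \<in> chosen_centres \<longleftrightarrow> ord b < ord m"
    unfolding chosen_centres_def
    using \<open>b \<in> V\<close> \<open>central m\<close> \<open>central b\<close> edge_sym[OF E(2)]
      central_neighbour_of_centre[OF diamond_swap_centres[OF d]] by blast
  moreover have "a \<notin> chosen_centres" using \<open>\<not> central a\<close> by (simp add: chosen_centres_def)
  moreover have "ord m \<noteq> ord b"
    using inj_on_ord \<open>m \<in> V\<close> \<open>b \<in> V\<close> diamondD(7)[OF d] by (auto simp: inj_on_def)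
  ultimately show ?thesis using in_transversal_iff by (cases "ord m < ord b") auto
qed

lemma triangle_meets_transversal_once:
  assumes T: "T \<in> triangles V E"
  shows "\<exists>z. T \<inter> transversal = {z}"
proof (cases "T \<in> plain_triangles")
  case True
  obtain x where x: "T \<inter> f T = {x}" "x \<in> T"
    using chosen_out_edge[OF True] by metis
  have "T \<inter> transversal = {x}"
  proof
    show "{x} \<subseteq> T \<inter> transversal" using x True by (auto simp: transversal_def)
    show "T \<inter> transversal \<subseteq> {x}"
    proof
      fix y assume y: "y \<in> T \<inter> transversal"
      then have "\<not> central y" using True by (auto simp: plain_triangles_def)
      then obtain T' where T': "T' \<in> plain_triangles" "y \<in> T' \<inter> f T'"
        using y by (auto simp: transversal_def chosen_centres_def)
      then have "T' = T"
        using noncentral_in_one_triangle[OF \<open>\<not> central y\<close>, of T' T] True y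
        by (auto simp: plain_triangles_def)
      then show "y \<in> {x}" using T' x(1) by auto
    qed
  qed
  then show ?thesis by blast
next
  case False
  then obtain m where "m \<in> T" "central m" using T by (auto simp: plain_triangles_def)
  then obtain a b c where d: "diamond m a b c" by (auto simp: central_def)
  from triangles_at_centre[OF d T \<open>m \<in> T\<close>] show ?thesis
  proof
    assume "T = {m, b, c}"
    then have "T = {m, c, b}" by auto
    then show ?thesis using diamond_triangle_meets_transversal_once[OF diamond_mirror[OF d]] by simp
  qed (use diamond_triangle_meets_transversal_once[OF d] in simp)
qed

end

lemma (in K4_free_cubic_graph) independent_triangle_transversal_exists:
  "\<exists>I. (\<forall>x\<in>I. \<forall>y\<in>I. \<not> E x y) \<and> (\<forall>T\<in>triangles V E. card (T \<inter> I) = 1)"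
proof -
  obtain f where f: "\<forall>T\<in>plain_triangles. f T \<in> out_edges T" "inj_on f plain_triangles"
    using obtain_out_edge_choice .
  obtain ord :: "'a \<Rightarrow> nat" where "inj_on ord V"
    using finite_imp_inj_to_nat_seg[OF finite_vertices] by blast
  interpret transversal_choice V E f ord
    using f \<open>inj_on ord V\<close> by unfold_locales auto
  have "card (T \<inter> transversal) = 1" if "T \<in> triangles V E" for T
    using triangle_meets_transversal_once[OF that] by auto
  then show ?thesis using transversal_independent by blast
qed

theorem lemma3p11:
  fixes V :: "'a set" and E :: "'a \<Rightarrow> 'a \<Rightarrow> bool"
  assumes "simple_graph V E"
    and "connected_graph V E"
    and "claw_free V E"
    and "cubic V E"
    and "\<not> is_K4 V E"
  shows "\<exists>P. vertex_cover V E P \<and> (\<forall>T\<in>triangles V E. card (T \<inter> P) = 2)"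
proof -
  interpret cubic_graph V E using assms(1,4) by unfold_locales
  interpret K4_free_cubic_graph V E
    using K4_subgraph_is_K4 assms(2,5) by unfold_locales blast
  obtain I where independent: "\<forall>x\<in>I. \<forall>y\<in>I. \<not> E x y"
    and once: "\<forall>T\<in>triangles V E. card (T \<inter> I) = 1"
    using independent_triangle_transversal_exists by blast
  have "vertex_cover V E (V - I)"
    using independent edge_vertices unfolding vertex_cover_def by blast
  moreover have "card (T \<inter> (V - I)) = 2" if T: "T \<in> triangles V E" for T
  proof -
    have "T \<inter> (V - I) = T - T \<inter> I" using triangle_subset_vertices[OF T] by blast
    then show ?thesis
      using card_triangle[OF T] once T finite_triangle[OF T] by (simp add: card_Diff_subset)
  qed
  ultimately show ?thesis by blast
qed

end
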